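(* Let $f:X\to\mathcal G$ be a convex function, $x\in\operatorname{dom} f$ and $u\in X$. Then $$f'(x,u)=\operatorname{cl}\operatorname{co}\bigcup_{t>0}\tfrac1t\big(f(x+tu)\ominus f(x)\big),$$ $f'(x,0)=0^+f(x)$, and the function $u\mapsto f'(x,u)$ is sublinear as a function from $X$ to $\mathcal G(Z,0^+f(x))$; that is, $f'(x,su)=sf'(x,u)$ for all $s>0$, $u\in X$, and $f'(x,su_1+(1-s)u_2)\supseteq sf'(x,u_1)\oplus(1-s)f'(x,u_2)$ for all $u_1,u_2\in X$, $s\in(0,1)$.
   Context: $X$ is a real linear space, $Z$ a real locally convex Hausdorff space, $C\subseteq Z$ a closed convex cone with $0\in C$ and $C^-=\{z^*\in Z^*:z^*(c)\le0\ \forall c\in C\}\ne\{0\}$. For a closed convex cone $K$ with $0\in K$, $\mathcal G(Z,K)=\{A\subseteq Z: A=\operatorname{cl}\operatorname{co}(A+K)\}$; $\mathcal G=\mathcal G(Z,C)$. $A\oplus B=\operatorname{cl}\{a+b\}$, $tA=\{ta\}$ for $t>0$, $A\ominus B=\{z: B+\{z\}\subseteq A\}$. $0^+A=\{z: A+\{z\}\subseteq A\}$ for $A\neq\emptyset$. $f$ convex: $f(tx_1+(1-t)x_2)\supseteq tf(x_1)\oplus(1-t)f(x_2)$; $\operatorname{dom}f=\{x: f(x)\ne\emptyset\}$. $f'(x,u)=\bigcap_{t_0>0}\operatorname{cl}\operatorname{co}\bigcup_{0<t<t_0}\frac1t\big(f(x+tu)\ominus f(x)\big)$. *)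

theory Defs
  imports "HOL-Analysis.Analysis"
begin

class lc_tvs = real_vector + t2_space +
  assumes add_continuous: "\<And>U a b. open U \<Longrightarrow> a + b \<in> U \<Longrightarrow>
      \<exists>V W. open V \<and> open W \<and> a \<in> V \<and> b \<in> W \<and> (\<forall>v\<in>V. \<forall>w\<in>W. v + w \<in> U)"
    and scaleR_continuous: "\<And>U r a. open U \<Longrightarrow> r *\<^sub>R a \<in> U \<Longrightarrow>
      \<exists>e>0. \<exists>W. open W \<and> a \<in> W \<and> (\<forall>s. \<bar>s - r\<bar> < e \<longrightarrow> (\<forall>w\<in>W. s *\<^sub>R w \<in> U))"
    and locally_convex: "\<And>U x. open U \<Longrightarrow> x \<in> U \<Longrightarrow> \<exists>V. open V \<and> (\<forall>y\<in>V. \<forall>z\<in>V. \<forall>t::real. 0 \<le> t \<and> t \<le> 1 \<longrightarrow> t *\<^sub>R y + (1 - t) *\<^sub>R z \<in> V) \<and> x \<in> V \<and> V \<subseteq> U"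

definition topdual :: "('z::lc_tvs \<Rightarrow> real) set" where
  "topdual = {\<phi>. linear \<phi> \<and> continuous_on UNIV \<phi>}"

definition neg_dual_cone :: "'z::lc_tvs set \<Rightarrow> ('z \<Rightarrow> real) set" where
  "neg_dual_cone C = {\<phi> \<in> topdual. \<forall>c\<in>C. \<phi> c \<le> 0}"

definition Gspace :: "'z::lc_tvs set \<Rightarrow> 'z set set" where
  "Gspace K = {A. A = closure (convex hull {a + k | a k. a \<in> A \<and> k \<in> K})}"

definition oplus :: "'z::lc_tvs set \<Rightarrow> 'z set \<Rightarrow> 'z set" (infixl "\<oplus>\<^sub>G" 65) where
  "A \<oplus>\<^sub>G B = closure {a + b | a b. a \<in> A \<and> b \<in> B}"

definition sscale :: "real \<Rightarrow> 'z::real_vector set \<Rightarrow> 'z set" where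
  "sscale t A = (\<lambda>a. t *\<^sub>R a) ` A"

definition ominus :: "'z::real_vector set \<Rightarrow> 'z set \<Rightarrow> 'z set" (infixl "\<ominus>\<^sub>G" 65) where
  "A \<ominus>\<^sub>G B = {z. \<forall>b\<in>B. b + z \<in> A}"

text \<open>Recession cone 0^+A (used only for nonempty A).\<close>
definition recc :: "'z::real_vector set \<Rightarrow> 'z set" where
  "recc A = {z. \<forall>a\<in>A. a + z \<in> A}"

definition set_convex_fun :: "('x::real_vector \<Rightarrow> 'z::lc_tvs set) \<Rightarrow> bool" where
  "set_convex_fun f \<longleftrightarrow> (\<forall>x1 x2 t. 0 < t \<and> t < 1 \<longrightarrow>
      sscale t (f x1) \<oplus>\<^sub>G sscale (1 - t) (f x2) \<subseteq> f (t *\<^sub>R x1 + (1 - t) *\<^sub>R x2))"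

definition sdom :: "('x \<Rightarrow> 'z set) \<Rightarrow> 'x set" where
  "sdom f = {x. f x \<noteq> {}}"

definition dir_deriv :: "('x::real_vector \<Rightarrow> 'z::lc_tvs set) \<Rightarrow> 'x \<Rightarrow> 'x \<Rightarrow> 'z set" where
  "dir_deriv f x u = (\<Inter>t0\<in>{0<..}. closure (convex hull
      (\<Union>t\<in>{0<..<t0}. sscale (1 / t) (f (x + t *\<^sub>R u) \<ominus>\<^sub>G f x))))"

end

theory Submission
  imports Defs
begin

text \<open>Convexity of \<open>f\<close> makes the difference quotient \<open>(1/t)(f(x+tu) \<ominus> f(x))\<close> shrink as \<open>t\<close>
grows, so every set in the intersection defining \<open>f'(x,u)\<close> is the closed convex hull of the union
of all difference quotients. The remaining claims are statements about this union: for \<open>u = 0\<close>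
every quotient is the recession cone of \<open>f(x)\<close>; that cone is contained in the recession
cone of every quotient; rescaling \<open>u\<close>
only reparametrises \<open>t\<close>; and convex combinations of quotients with a common \<open>t\<close> are quotients
for the combined direction.\<close>

lemma closure_lincomb_mem:
  fixes A B :: "'z::lc_tvs set"
  assumes a: "a \<in> closure A" and b: "b \<in> closure B"
  shows "r *\<^sub>R a + s *\<^sub>R b \<in> closure {r *\<^sub>R a' + s *\<^sub>R b' | a' b'. a' \<in> A \<and> b' \<in> B}"
  unfolding closure_iff_nhds_not_empty
proof (intro allI impI)
  fix U S assume SU: "S \<subseteq> U" and S: "open S" "r *\<^sub>R a + s *\<^sub>R b \<in> S"
  obtain V W where VW: "open V" "open W" "r *\<^sub>R a \<in> V" "s *\<^sub>R b \<in> W"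
    and sum: "\<forall>v\<in>V. \<forall>w\<in>W. v + w \<in> S"
    using add_continuous[OF S] by blast
  obtain V' where V': "open V'" "a \<in> V'" "\<forall>v\<in>V'. r *\<^sub>R v \<in> V"
    using scaleR_continuous[OF VW(1,3)] by fastforce
  obtain W' where W': "open W'" "b \<in> W'" "\<forall>w\<in>W'. s *\<^sub>R w \<in> W"
    using scaleR_continuous[OF VW(2,4)] by fastforce
  obtain a' where "a' \<in> A" "a' \<in> V'" using a V' unfolding closure_iff_nhds_not_empty by blast
  moreover obtain b' where "b' \<in> B" "b' \<in> W'" using b W' unfolding closure_iff_nhds_not_empty by blast
  ultimately show "{r *\<^sub>R a' + s *\<^sub>R b' | a' b'. a' \<in> A \<and> b' \<in> B} \<inter> U \<noteq> {}"
    using sum V' W' SU by blast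
qed

lemma convex_closure_lc:
  fixes S :: "'z::lc_tvs set"
  assumes "convex S"
  shows "convex (closure S)"
proof (rule convexI)
  fix a b and u v :: real
  assume a: "a \<in> closure S" and b: "b \<in> closure S" and uv: "0 \<le> u" "0 \<le> v" "u + v = 1"
  have "{u *\<^sub>R a' + v *\<^sub>R b' | a' b'. a' \<in> S \<and> b' \<in> S} \<subseteq> S"
    using assms uv unfolding convex_def by blast
  then show "u *\<^sub>R a + v *\<^sub>R b \<in> closure S"
    using closure_lincomb_mem[OF a b, of u v] closure_mono by blast
qed

lemma closure_translation_mem:
  fixes A :: "'z::lc_tvs set"
  assumes "a \<in> closure A"
  shows "a + k \<in> closure ((\<lambda>y. y + k) ` A)"
proof -
  have "k \<in> closure {k}" by (simp add: closure_subset[THEN subsetD])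
  moreover have "{1 *\<^sub>R a' + 1 *\<^sub>R b' | a' b'. a' \<in> A \<and> b' \<in> {k}} = (\<lambda>y. y + k) ` A" by auto
  ultimately show ?thesis
    using closure_lincomb_mem[OF assms, where r = 1 and s = 1] by fastforce
qed

lemma sscale_closure_subset:
  fixes A :: "'z::lc_tvs set"
  shows "sscale r (closure A) \<subseteq> closure (sscale r A)"
proof
  fix y assume "y \<in> sscale r (closure A)"
  then obtain a where a: "a \<in> closure A" "y = r *\<^sub>R a" by (auto simp: sscale_def)
  have "(0::'z) \<in> closure {0}" by (simp add: closure_subset[THEN subsetD])
  moreover have "{r *\<^sub>R a' + 0 *\<^sub>R b' | a' b'. a' \<in> A \<and> b' \<in> {0::'z}} = sscale r A"
    by (auto simp: sscale_def)
  ultimately show "y \<in> closure (sscale r A)"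
    using closure_lincomb_mem[OF a(1), where r = r and s = 0] a(2) by fastforce
qed

lemma sscale_one [simp]: "sscale 1 A = A"
  by (simp add: sscale_def)

lemma sscale_sscale: "sscale a (sscale b A) = sscale (a * b) A"
  by (auto simp: sscale_def image_image)

lemma sscale_closure:
  fixes A :: "'z::lc_tvs set"
  assumes "r \<noteq> 0"
  shows "sscale r (closure A) = closure (sscale r A)"
proof
  have "sscale (1 / r) (closure (sscale r A)) \<subseteq> closure A"
    using sscale_closure_subset[of "1 / r" "sscale r A"] assms by (simp add: sscale_sscale)
  then have "sscale r (sscale (1 / r) (closure (sscale r A))) \<subseteq> sscale r (closure A)"
    by (auto simp: sscale_def)
  then show "closure (sscale r A) \<subseteq> sscale r (closure A)"
    using assms by (simp add: sscale_sscale)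
qed (rule sscale_closure_subset)

lemma convex_hull_sscale: "convex hull (sscale c S) = sscale c (convex hull S)"
  unfolding sscale_def by (rule convex_hull_scaling)

lemma closure_convex_hull_lincomb_subset:
  fixes P Q R :: "'z::lc_tvs set"
  assumes "\<And>p q. p \<in> P \<Longrightarrow> q \<in> Q \<Longrightarrow> r *\<^sub>R p + s *\<^sub>R q \<in> R"
  shows "sscale r (closure (convex hull P)) \<oplus>\<^sub>G sscale s (closure (convex hull Q))
           \<subseteq> closure (convex hull R)"
proof -
  have "{r *\<^sub>R a + s *\<^sub>R b | a b. a \<in> convex hull P \<and> b \<in> convex hull Q}
      = sscale r (convex hull P) + sscale s (convex hull Q)"
    by (auto simp: sscale_def set_plus_def)
  also have "\<dots> = convex hull (sscale r P + sscale s Q)"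
    by (simp add: convex_hull_set_plus convex_hull_sscale)
  also have "\<dots> \<subseteq> convex hull R"
    by (rule hull_mono) (auto simp: sscale_def set_plus_def assms)
  finally have hull: "{r *\<^sub>R a + s *\<^sub>R b | a b. a \<in> convex hull P \<and> b \<in> convex hull Q}
      \<subseteq> convex hull R" .
  have "{a + b | a b. a \<in> sscale r (closure (convex hull P)) \<and> b \<in> sscale s (closure (convex hull Q))}
      \<subseteq> closure (convex hull R)"
    using closure_lincomb_mem closure_mono[OF hull] by (fastforce simp: sscale_def)
  then show ?thesis
    unfolding oplus_def by (rule closure_minimal) simp
qed

lemma recc_convex:
  assumes "convex A"
  shows "convex (recc A)"
proof (rule convexI)
  fix z1 z2 and u v :: real
  assume z: "z1 \<in> recc A" "z2 \<in> recc A" and uv: "0 \<le> u" "0 \<le> v" "u + v = 1"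
  have "a + (u *\<^sub>R z1 + v *\<^sub>R z2) \<in> A" if a: "a \<in> A" for a
  proof -
    have "u *\<^sub>R (a + z1) + v *\<^sub>R (a + z2) \<in> A"
      using assms z a uv unfolding recc_def convex_def by blast
    moreover have "u *\<^sub>R (a + z1) + v *\<^sub>R (a + z2) = (u + v) *\<^sub>R a + (u *\<^sub>R z1 + v *\<^sub>R z2)"
      by (simp add: algebra_simps)
    ultimately show ?thesis using uv by simp
  qed
  then show "u *\<^sub>R z1 + v *\<^sub>R z2 \<in> recc A" by (simp add: recc_def)
qed

lemma recc_of_nat_scaleR: "z \<in> recc A \<Longrightarrow> real n *\<^sub>R z \<in> recc A"
  by (induction n) (auto simp: recc_def scaleR_add_left add.assoc[symmetric])

lemma recc_scaleR:
  assumes A: "convex A" and z: "z \<in> recc A" and c: "0 \<le> c"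
  shows "c *\<^sub>R z \<in> recc A"
proof -
  obtain n :: nat where n: "c \<le> real n" "1 \<le> real n"
    using real_arch_simple[of "max c 1"] by auto
  let ?m = "c / real n"
  have m: "0 \<le> ?m" "?m \<le> 1" using c n by auto
  have "a + c *\<^sub>R z \<in> A" if a: "a \<in> A" for a
  proof -
    have "a + real n *\<^sub>R z \<in> A" using recc_of_nat_scaleR[OF z] a by (simp add: recc_def)
    then have "?m *\<^sub>R (a + real n *\<^sub>R z) + (1 - ?m) *\<^sub>R a \<in> A"
      using A a m unfolding convex_def by simp
    moreover have "?m *\<^sub>R (a + real n *\<^sub>R z) + (1 - ?m) *\<^sub>R a = a + c *\<^sub>R z"
      using n by (simp add: algebra_simps)
    ultimately show ?thesis by simp
  qed
  then show ?thesis by (simp add: recc_def)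
qed

lemma sscale_recc:
  assumes "convex A" "0 < c"
  shows "sscale c (recc A) = recc A"
proof
  show "sscale c (recc A) \<subseteq> recc A"
    using recc_scaleR[OF assms(1)] assms(2) by (auto simp: sscale_def)
  show "recc A \<subseteq> sscale c (recc A)"
  proof
    fix z assume "z \<in> recc A"
    then have "(1 / c) *\<^sub>R z \<in> recc A" using recc_scaleR[OF assms(1)] assms(2) by simp
    moreover have "z = c *\<^sub>R ((1 / c) *\<^sub>R z)" using assms(2) by simp
    ultimately show "z \<in> sscale c (recc A)" unfolding sscale_def by blast
  qed
qed

lemma scaleR_mem_recc_sscale: "z \<in> recc A \<Longrightarrow> c *\<^sub>R z \<in> recc (sscale c A)"
  by (auto simp: recc_def sscale_def simp flip: scaleR_add_right)

lemma ominus_self: "A \<ominus>\<^sub>G A = recc A"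
  by (simp add: ominus_def recc_def)

lemma recc_subset_recc_ominus: "recc B \<subseteq> recc (A \<ominus>\<^sub>G B)"
  unfolding recc_def ominus_def by (auto simp: add_ac) (metis add.assoc add.commute)

lemma recc_subset_recc_convex_hull: "recc S \<subseteq> recc (convex hull S)"
proof
  fix k assume k: "k \<in> recc S"
  have "(\<lambda>a. k + a) ` (convex hull S) = convex hull ((\<lambda>a. k + a) ` S)"
    by (rule convex_hull_translation[symmetric])
  also have "\<dots> \<subseteq> convex hull S"
    using k by (intro hull_mono) (auto simp: recc_def add.commute)
  finally show "k \<in> recc (convex hull S)" by (auto simp: recc_def add.commute)
qed

lemma recc_subset_recc_closure:
  fixes A :: "'z::lc_tvs set"
  shows "recc A \<subseteq> recc (closure A)"
proof
  fix k assume k: "k \<in> recc A"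
  have "a + k \<in> closure A" if "a \<in> closure A" for a
    using closure_translation_mem[OF that] closure_mono[of "(\<lambda>a. a + k) ` A" A] k
    by (auto simp: recc_def)
  then show "k \<in> recc (closure A)" by (simp add: recc_def)
qed

lemma closed_recc:
  fixes A :: "'z::lc_tvs set"
  assumes "closed A"
  shows "closed (recc A)"
proof -
  have "z \<in> recc A" if z: "z \<in> closure (recc A)" for z
  proof -
    have "z + a \<in> A" if "a \<in> A" for a
    proof -
      have "(\<lambda>z. z + a) ` recc A \<subseteq> A" using that by (auto simp: recc_def add.commute)
      then show ?thesis
        using closure_translation_mem[OF z] closure_minimal assms by blast
    qed
    then show ?thesis by (simp add: recc_def add.commute)
  qed
  then show ?thesis using closure_subset_eq by blast
qed

lemma Gspace_closed: "A \<in> Gspace K \<Longrightarrow> closed A"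
  unfolding Gspace_def by (metis (mono_tags) closed_closure mem_Collect_eq)

lemma Gspace_convex: "A \<in> Gspace K \<Longrightarrow> convex A"
  unfolding Gspace_def by (metis (mono_tags) convex_closure_lc convex_convex_hull mem_Collect_eq)

lemma Gspace_if_recc:
  assumes "closed A" "convex A" "0 \<in> K" "K \<subseteq> recc A"
  shows "A \<in> Gspace K"
proof -
  have "{a + k | a k. a \<in> A \<and> k \<in> K} = A"
    using assms(3,4) by (force simp: recc_def)
  then show ?thesis
    using assms(1,2) by (simp add: Gspace_def hull_same closure_closed)
qed

lemma set_convex_funD:
  assumes "set_convex_fun f" "0 < m" "m < 1" "a \<in> f y1" "b \<in> f y2"
  shows "m *\<^sub>R a + (1 - m) *\<^sub>R b \<in> f (m *\<^sub>R y1 + (1 - m) *\<^sub>R y2)"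
proof -
  have "m *\<^sub>R a + (1 - m) *\<^sub>R b \<in> sscale m (f y1) \<oplus>\<^sub>G sscale (1 - m) (f y2)"
    using assms(4,5) unfolding oplus_def sscale_def by (blast intro: closure_subset[THEN subsetD])
  then show ?thesis
    using assms(1-3) unfolding set_convex_fun_def by blast
qed

definition diff_quot :: "('x::real_vector \<Rightarrow> 'z::lc_tvs set) \<Rightarrow> 'x \<Rightarrow> real \<Rightarrow> 'x \<Rightarrow> 'z set" where
  "diff_quot f x t u = sscale (1 / t) (f (x + t *\<^sub>R u) \<ominus>\<^sub>G f x)"

lemma diff_quot_convex_comb:
  assumes f: "set_convex_fun f" and s: "0 < s" "s < 1"
    and q1: "q1 \<in> diff_quot f x t u1" and q2: "q2 \<in> diff_quot f x t u2"
  shows "s *\<^sub>R q1 + (1 - s) *\<^sub>R q2 \<in> diff_quot f x t (s *\<^sub>R u1 + (1 - s) *\<^sub>R u2)"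
proof -
  let ?w = "s *\<^sub>R u1 + (1 - s) *\<^sub>R u2"
  obtain z1 z2 where z1: "z1 \<in> f (x + t *\<^sub>R u1) \<ominus>\<^sub>G f x" "q1 = (1 / t) *\<^sub>R z1"
    and z2: "z2 \<in> f (x + t *\<^sub>R u2) \<ominus>\<^sub>G f x" "q2 = (1 / t) *\<^sub>R z2"
    using q1 q2 by (auto simp: diff_quot_def sscale_def)
  have "b + (s *\<^sub>R z1 + (1 - s) *\<^sub>R z2) \<in> f (x + t *\<^sub>R ?w)" if b: "b \<in> f x" for b
  proof -
    have "b + z1 \<in> f (x + t *\<^sub>R u1)" "b + z2 \<in> f (x + t *\<^sub>R u2)"
      using z1 z2 b unfolding ominus_def by blast+
    from set_convex_funD[OF f s this]
    show ?thesis by (simp add: algebra_simps)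
  qed
  then have "s *\<^sub>R z1 + (1 - s) *\<^sub>R z2 \<in> f (x + t *\<^sub>R ?w) \<ominus>\<^sub>G f x"
    by (simp add: ominus_def)
  moreover have "s *\<^sub>R q1 + (1 - s) *\<^sub>R q2 = (1 / t) *\<^sub>R (s *\<^sub>R z1 + (1 - s) *\<^sub>R z2)"
    using z1(2) z2(2) by (simp add: scaleR_add_right)
  ultimately show ?thesis by (auto simp: diff_quot_def sscale_def)
qed

lemma diff_quot_antimono:
  assumes f: "set_convex_fun f" and "0 < s" "s \<le> t"
  shows "diff_quot f x t u \<subseteq> diff_quot f x s u"
proof (cases "s = t")
  case False
  then have m: "0 < s / t" "s / t < 1" using assms by auto
  show ?thesis
  proof
    fix q assume "q \<in> diff_quot f x t u"
    then obtain z where z: "z \<in> f (x + t *\<^sub>R u) \<ominus>\<^sub>G f x" "q = (1 / t) *\<^sub>R z"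
      by (auto simp: diff_quot_def sscale_def)
    have "b + (s / t) *\<^sub>R z \<in> f (x + s *\<^sub>R u)" if b: "b \<in> f x" for b
    proof -
      have "b + z \<in> f (x + t *\<^sub>R u)" using z b unfolding ominus_def by blast
      from set_convex_funD[OF f m this b]
      show ?thesis using assms by (simp add: algebra_simps)
    qed
    then have "(s / t) *\<^sub>R z \<in> f (x + s *\<^sub>R u) \<ominus>\<^sub>G f x" by (simp add: ominus_def)
    moreover have "q = (1 / s) *\<^sub>R ((s / t) *\<^sub>R z)" using z assms by simp
    ultimately show "q \<in> diff_quot f x s u" unfolding diff_quot_def sscale_def by blast
  qed
qed simp

lemma dir_deriv_eq_closure_convex_hull:
  assumes f: "set_convex_fun f"
  shows "dir_deriv f x u = closure (convex hull (\<Union>t\<in>{0<..}. diff_quot f x t u))"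
proof -
  have "(\<Union>t\<in>{0<..<t0}. diff_quot f x t u) = (\<Union>t\<in>{0<..}. diff_quot f x t u)"
    if t0: "t0 > 0" for t0 :: real
  proof
    show "(\<Union>t\<in>{0<..}. diff_quot f x t u) \<subseteq> (\<Union>t\<in>{0<..<t0}. diff_quot f x t u)"
    proof (intro UN_least)
      fix t :: real assume "t \<in> {0<..}"
      then have "diff_quot f x t u \<subseteq> diff_quot f x (min t (t0 / 2)) u"
        and "min t (t0 / 2) \<in> {0<..<t0}"
        using diff_quot_antimono[OF f] t0 by auto
      then show "diff_quot f x t u \<subseteq> (\<Union>t\<in>{0<..<t0}. diff_quot f x t u)" by blast
    qed
  qed auto
  then show ?thesis unfolding dir_deriv_def diff_quot_def[symmetric] by auto
qed

lemma dir_deriv_zero: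
  assumes "set_convex_fun f" "closed (f x)" "convex (f x)"
  shows "dir_deriv f x 0 = recc (f x)"
proof -
  have "(\<Union>t\<in>{0<..}. diff_quot f x t 0) = recc (f x)"
    using sscale_recc[OF assms(3)] by (simp add: diff_quot_def ominus_self)
  moreover have "closed (recc (f x))" "convex (recc (f x))"
    using assms closed_recc recc_convex by auto
  ultimately show ?thesis
    using assms by (simp add: dir_deriv_eq_closure_convex_hull hull_same closure_closed)
qed

lemma recc_subset_recc_diff_quot:
  assumes "convex (f x)" "0 < t"
  shows "recc (f x) \<subseteq> recc (diff_quot f x t u)"
proof
  fix k assume "k \<in> recc (f x)"
  then have "t *\<^sub>R k \<in> recc (f (x + t *\<^sub>R u) \<ominus>\<^sub>G f x)"
    using recc_scaleR[OF assms(1)] recc_subset_recc_ominus assms(2) by fastforce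
  then show "k \<in> recc (diff_quot f x t u)"
    using scaleR_mem_recc_sscale[of "t *\<^sub>R k" _ "1 / t"] assms(2) by (simp add: diff_quot_def)
qed

lemma dir_deriv_in_Gspace_recc:
  assumes "set_convex_fun f" "convex (f x)"
  shows "dir_deriv f x u \<in> Gspace (recc (f x))"
proof -
  let ?Q = "\<Union>t\<in>{0<..}. diff_quot f x t u"
  have "recc (f x) \<subseteq> recc ?Q"
    using recc_subset_recc_diff_quot[of f x, OF assms(2)] by (force simp: recc_def)
  also have "\<dots> \<subseteq> recc (closure (convex hull ?Q))"
    using recc_subset_recc_convex_hull recc_subset_recc_closure by blast
  finally have "recc (f x) \<subseteq> recc (dir_deriv f x u)"
    by (simp add: dir_deriv_eq_closure_convex_hull[OF assms(1)])
  moreover have "0 \<in> recc (f x)" by (simp add: recc_def)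
  ultimately show ?thesis
    by (intro Gspace_if_recc)
      (simp_all add: dir_deriv_eq_closure_convex_hull[OF assms(1)] convex_closure_lc)
qed

lemma diff_quot_scaleR:
  assumes "0 < s" "0 < t"
  shows "diff_quot f x t (s *\<^sub>R u) = sscale s (diff_quot f x (t * s) u)"
  using assms by (auto simp: diff_quot_def sscale_def image_image algebra_simps)

lemma dir_deriv_scaleR:
  assumes f: "set_convex_fun f" and s: "0 < s"
  shows "dir_deriv f x (s *\<^sub>R u) = sscale s (dir_deriv f x u)"
proof -
  have pos: "{0<..} = (\<lambda>t. t * s) ` {0<..}"
    using s by (auto simp: image_iff intro!: bexI[of _ "_ / s"])
  have "(\<Union>t\<in>{0<..}. diff_quot f x t (s *\<^sub>R u)) = (\<Union>t\<in>{0<..}. sscale s (diff_quot f x (t * s) u))"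
    using s by (simp add: diff_quot_scaleR)
  also have "\<dots> = sscale s (\<Union>t\<in>{0<..}. diff_quot f x t u)"
    by (subst (2) pos) (simp add: sscale_def image_UN)
  finally show ?thesis
    using s by (simp add: dir_deriv_eq_closure_convex_hull[OF f] convex_hull_sscale sscale_closure)
qed

lemma dir_deriv_convex_comb:
  assumes f: "set_convex_fun f" and s: "0 < s" "s < 1"
  shows "sscale s (dir_deriv f x u1) \<oplus>\<^sub>G sscale (1 - s) (dir_deriv f x u2)
           \<subseteq> dir_deriv f x (s *\<^sub>R u1 + (1 - s) *\<^sub>R u2)"
  unfolding dir_deriv_eq_closure_convex_hull[OF f]
proof (rule closure_convex_hull_lincomb_subset)
  fix q1 q2
  assume "q1 \<in> (\<Union>t\<in>{0<..}. diff_quot f x t u1)" "q2 \<in> (\<Union>t\<in>{0<..}. diff_quot f x t u2)"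
  then obtain t1 t2 where t: "0 < t1" "0 < t2"
    and q: "q1 \<in> diff_quot f x t1 u1" "q2 \<in> diff_quot f x t2 u2"
    by auto
  have "diff_quot f x t1 u1 \<subseteq> diff_quot f x (min t1 t2) u1"
    by (rule diff_quot_antimono[OF f]) (use t in auto)
  moreover have "diff_quot f x t2 u2 \<subseteq> diff_quot f x (min t1 t2) u2"
    by (rule diff_quot_antimono[OF f]) (use t in auto)
  ultimately have "q1 \<in> diff_quot f x (min t1 t2) u1" "q2 \<in> diff_quot f x (min t1 t2) u2"
    using q by auto
  from diff_quot_convex_comb[OF f s this] t
  show "s *\<^sub>R q1 + (1 - s) *\<^sub>R q2 \<in> (\<Union>t\<in>{0<..}. diff_quot f x t (s *\<^sub>R u1 + (1 - s) *\<^sub>R u2))"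
    by auto
qed

theorem mainTheorem8:
  fixes f :: "'x::real_vector \<Rightarrow> 'z::lc_tvs set"
    and C :: "'z set" and x :: 'x
  assumes "closed C" and "convex C" and "cone C" and "0 \<in> C"
    and "neg_dual_cone C \<noteq> {\<lambda>z. 0}"
    and "\<forall>y. f y \<in> Gspace C"
    and "set_convex_fun f"
    and "x \<in> sdom f"
  shows "(\<forall>u. dir_deriv f x u = closure (convex hull
            (\<Union>t\<in>{0<..}. sscale (1 / t) (f (x + t *\<^sub>R u) \<ominus>\<^sub>G f x))))
    \<and> dir_deriv f x 0 = recc (f x)
    \<and> (\<forall>u. dir_deriv f x u \<in> Gspace (recc (f x)))
    \<and> (\<forall>s u. 0 < s \<longrightarrow> dir_deriv f x (s *\<^sub>R u) = sscale s (dir_deriv f x u))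
    \<and> (\<forall>s u1 u2. 0 < s \<and> s < 1 \<longrightarrow>
         sscale s (dir_deriv f x u1) \<oplus>\<^sub>G sscale (1 - s) (dir_deriv f x u2)
           \<subseteq> dir_deriv f x (s *\<^sub>R u1 + (1 - s) *\<^sub>R u2))"
proof -
  have closed: "closed (f x)" and convex: "convex (f x)"
    using assms(6) Gspace_closed Gspace_convex by blast+
  have "dir_deriv f x u = closure (convex hull
            (\<Union>t\<in>{0<..}. sscale (1 / t) (f (x + t *\<^sub>R u) \<ominus>\<^sub>G f x)))" for u
    using dir_deriv_eq_closure_convex_hull[OF assms(7)] by (simp add: diff_quot_def)
  then show ?thesis
    using dir_deriv_zero[OF assms(7) closed convex]
      dir_deriv_in_Gspace_recc[OF assms(7) convex]
      dir_deriv_scaleR[OF assms(7)]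
      dir_deriv_convex_comb[OF assms(7)]
    by blast
qed

end
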